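(* Let $R$ be a commutative Noetherian semiring and $I$ a $k$-ideal of $R$. If $I=\bigcap_{i=1}^n Q_i$ is a reduced primary decomposition of $I$ with $\sqrt{Q_i}=P_i$ for $i=1,\dots,n$, then $$\{P_1,\dots,P_n\}=\{P \text{ prime ideal of } R \mid \exists\, x\in R \text{ such that } P=\sqrt{(I:x)}\}.$$ In particular, the set $\{P_1,\dots,P_n\}$ is independent of the particular reduced primary decomposition chosen for $I$.
   Context: A semiring is a set $R$ with addition and multiplication such that $(R,+)$ is a commutative monoid with identity $0$, $(R,\cdot)$ is a monoid with identity $1$, multiplication distributes over addition on both sides, $0\cdot r=0=r\cdot 0$ for all $r$, and $1\neq 0$. $R$ is commutative if $(R,\cdot)$ is commutative. An ideal of $R$ is a nonempty subset closed under addition and under multiplication by arbitrary elements of $R$. $R$ is Noetherian if it satisfies the ascending chain condition on ideals. An ideal $I$ is a $k$-ideal if $x+y\in I$ and $x\in I$ imply $y\in I$. A proper ideal $P$ is prime if $ab\in P$ implies $a\in P$ or $b\in P$. The radical of an ideal $I$ is $\sqrt{I}=\{a\in R\mid a^n\in I \text{ for some } n\ge 1\}$. A proper ideal $Q$ is primary if $xy\in Q$ implies $x\in Q$ or $y\in\sqrt{Q}$. For $x\in R$, $(I:x)=\{r\in R\mid rx\in I\}$. A primary decomposition $I=\bigcap_{i=1}^n Q_i$ (each $Q_i$ primary, $P_i=\sqrt{Q_i}$) is reduced if the $P_i$ are pairwise distinct and $I$ is not the intersection of any proper subfamily of the $Q_i$. *)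

theory Defs
  imports Main
begin

definition sr_ideal :: "'a::comm_semiring_1 set \<Rightarrow> bool" where
  "sr_ideal I \<longleftrightarrow> I \<noteq> {} \<and> (\<forall>x\<in>I. \<forall>y\<in>I. x + y \<in> I)
     \<and> (\<forall>r x. x \<in> I \<longrightarrow> r * x \<in> I \<and> x * r \<in> I)"

definition sr_noetherian :: "'a::comm_semiring_1 itself \<Rightarrow> bool" where
  "sr_noetherian TYPE('a) \<longleftrightarrow>
     (\<forall>C :: nat \<Rightarrow> 'a set. (\<forall>n. sr_ideal (C n)) \<and> (\<forall>n. C n \<subseteq> C (Suc n))
        \<longrightarrow> (\<exists>m. \<forall>n\<ge>m. C n = C m))"

definition k_ideal :: "'a::comm_semiring_1 set \<Rightarrow> bool" where
  "k_ideal I \<longleftrightarrow> sr_ideal I \<and> (\<forall>x y. x + y \<in> I \<and> x \<in> I \<longrightarrow> y \<in> I)"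

definition sr_prime :: "'a::comm_semiring_1 set \<Rightarrow> bool" where
  "sr_prime P \<longleftrightarrow> sr_ideal P \<and> P \<noteq> UNIV \<and> (\<forall>a b. a * b \<in> P \<longrightarrow> a \<in> P \<or> b \<in> P)"

definition sr_radical :: "'a::comm_semiring_1 set \<Rightarrow> 'a set" where
  "sr_radical I = {a. \<exists>n\<ge>1. a ^ n \<in> I}"

definition sr_primary :: "'a::comm_semiring_1 set \<Rightarrow> bool" where
  "sr_primary Q \<longleftrightarrow> sr_ideal Q \<and> Q \<noteq> UNIV \<and>
     (\<forall>x y. x * y \<in> Q \<longrightarrow> x \<in> Q \<or> y \<in> sr_radical Q)"

definition sr_colon :: "'a::comm_semiring_1 set \<Rightarrow> 'a \<Rightarrow> 'a set" where
  "sr_colon I x = {r. r * x \<in> I}"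

text \<open>Reduced primary decomposition I = Q_0 \<inter> ... \<inter> Q_(n-1), indexed by i < n.\<close>
definition reduced_primary_decomp :: "'a::comm_semiring_1 set \<Rightarrow> nat \<Rightarrow> (nat \<Rightarrow> 'a set) \<Rightarrow> bool" where
  "reduced_primary_decomp I n Q \<longleftrightarrow>
     (\<forall>i<n. sr_primary (Q i)) \<and>
     I = (\<Inter>i\<in>{..<n}. Q i) \<and>
     (\<forall>i<n. \<forall>j<n. i \<noteq> j \<longrightarrow> sr_radical (Q i) \<noteq> sr_radical (Q j)) \<and>
     (\<forall>J. J \<subset> {..<n} \<longrightarrow> I \<noteq> (\<Inter>i\<in>J. Q i))"

end

theory Submission
  imports Defs
begin

text \<open>For a primary ideal Q the radical of (Q : x) is the whole semiring if x \<in> Q and the prime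
  \<open>\<surd>Q\<close> otherwise. Since colon ideals and radicals commute with finite intersections,
  \<open>\<surd>(I : x)\<close> is the intersection of those \<open>P\<^sub>i\<close> with \<open>x \<notin> Q\<^sub>i\<close>. A prime that is a finite
  intersection of ideals equals one of them, so every prime of this form is some \<open>P\<^sub>i\<close>;
  conversely, minimality of the decomposition yields x lying in every \<open>Q\<^sub>i\<close> but \<open>Q\<^sub>j\<close>, and
  then \<open>\<surd>(I : x) = P\<^sub>j\<close>.\<close>

lemma sr_ideal_add: "sr_ideal J \<Longrightarrow> a \<in> J \<Longrightarrow> b \<in> J \<Longrightarrow> a + b \<in> J"
  unfolding sr_ideal_def by blast

lemma sr_ideal_mult_left: "sr_ideal J \<Longrightarrow> a \<in> J \<Longrightarrow> r * a \<in> J"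
  unfolding sr_ideal_def by blast

lemma sr_ideal_mult_right: "sr_ideal J \<Longrightarrow> a \<in> J \<Longrightarrow> a * r \<in> J"
  unfolding sr_ideal_def by blast

lemma sr_ideal_zero: "sr_ideal J \<Longrightarrow> 0 \<in> J"
  unfolding sr_ideal_def by (metis all_not_in_conv mult_zero_left)

lemma sr_ideal_one_iff: "sr_ideal J \<Longrightarrow> 1 \<in> J \<longleftrightarrow> J = UNIV"
  using sr_ideal_mult_right[of J 1] by auto

lemma sr_ideal_sum: "sr_ideal J \<Longrightarrow> \<forall>k\<in>A. f k \<in> J \<Longrightarrow> sum f A \<in> J"
  by (induction A rule: infinite_finite_induct) (auto simp: sr_ideal_zero sr_ideal_add)

lemma sr_ideal_INT:
  assumes J: "\<forall>i\<in>A. sr_ideal (J i)"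
  shows "sr_ideal (\<Inter>i\<in>A. J i)"
proof -
  have "0 \<in> (\<Inter>i\<in>A. J i)"
    using J sr_ideal_zero by auto
  then have "(\<Inter>i\<in>A. J i) \<noteq> {}"
    by blast
  then show ?thesis
    using J unfolding sr_ideal_def by auto
qed

lemma sr_ideal_power_mono:
  assumes "sr_ideal J" "a ^ m \<in> J" "m \<le> N"
  shows "a ^ N \<in> J"
proof -
  have "a ^ m * a ^ (N - m) \<in> J"
    using assms by (simp add: sr_ideal_mult_right)
  then show ?thesis
    using \<open>m \<le> N\<close> by (simp flip: power_add)
qed

lemma sr_radicalI: "1 \<le> m \<Longrightarrow> a ^ m \<in> J \<Longrightarrow> a \<in> sr_radical J"
  unfolding sr_radical_def by blast

lemma sr_radicalE:
  "a \<in> sr_radical J \<Longrightarrow> (\<And>m. 1 \<le> m \<Longrightarrow> a ^ m \<in> J \<Longrightarrow> thesis) \<Longrightarrow> thesis"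
  unfolding sr_radical_def by blast

lemma sr_radical_UNIV: "sr_radical UNIV = UNIV"
  unfolding sr_radical_def by auto

lemma sr_radical_power: "b ^ m \<in> sr_radical J \<Longrightarrow> 1 \<le> m \<Longrightarrow> b \<in> sr_radical J"
  by (erule sr_radicalE, rule sr_radicalI[of "m * _"]) (auto simp: power_mult)

lemma sr_ideal_radical:
  assumes J: "sr_ideal J"
  shows "sr_ideal (sr_radical J)"
proof -
  have "a + b \<in> sr_radical J" if ab: "a \<in> sr_radical J" "b \<in> sr_radical J" for a b
  proof -
    obtain m l where m: "1 \<le> m" "a ^ m \<in> J" and l: "1 \<le> l" "b ^ l \<in> J"
      using ab by (auto elim!: sr_radicalE)
    \<comment> \<open>every term of the binomial expansion contains \<open>a\<^sup>m\<close> or \<open>b\<^sup>l\<close>\<close>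
    have "(\<Sum>k\<le>m + l. of_nat (m + l choose k) * a ^ k * b ^ (m + l - k)) \<in> J"
    proof (intro sr_ideal_sum[OF J] ballI)
      fix k
      show "of_nat (m + l choose k) * a ^ k * b ^ (m + l - k) \<in> J"
      proof (cases "m \<le> k")
        case True
        then show ?thesis
          using sr_ideal_power_mono[OF J m(2)] J
          by (simp add: sr_ideal_mult_left sr_ideal_mult_right)
      next
        case False
        then show ?thesis
          using sr_ideal_power_mono[OF J l(2), of "m + l - k"] J
          by (simp add: sr_ideal_mult_left)
      qed
    qed
    then have "(a + b) ^ (m + l) \<in> J"
      by (simp add: binomial_ring)
    then show ?thesis
      using m(1) by (intro sr_radicalI[of "m + l"]) auto
  qed
  moreover have "r * a \<in> sr_radical J" if "a \<in> sr_radical J" for a r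
    using that by (rule sr_radicalE)
      (auto intro: sr_radicalI simp: power_mult_distrib sr_ideal_mult_left[OF J])
  moreover have "0 \<in> sr_radical J"
    using sr_ideal_zero[OF J] by (intro sr_radicalI[of 1]) auto
  ultimately show ?thesis
    unfolding sr_ideal_def by (metis empty_iff mult.commute)
qed

lemma sr_radical_Int:
  assumes "sr_ideal J" "sr_ideal K"
  shows "sr_radical (J \<inter> K) = sr_radical J \<inter> sr_radical K"
proof
  show "sr_radical J \<inter> sr_radical K \<subseteq> sr_radical (J \<inter> K)"
  proof
    fix a assume "a \<in> sr_radical J \<inter> sr_radical K"
    then obtain m l where "1 \<le> m" "a ^ m \<in> J" "a ^ l \<in> K"
      by (auto elim!: sr_radicalE)
    then show "a \<in> sr_radical (J \<inter> K)"
      using assms sr_ideal_power_mono[of _ a _ "m + l"] by (intro sr_radicalI[of "m + l"]) auto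
  qed
qed (auto simp: sr_radical_def)

lemma sr_radical_INT:
  assumes "finite A" "\<forall>i\<in>A. sr_ideal (J i)"
  shows "sr_radical (\<Inter>i\<in>A. J i) = (\<Inter>i\<in>A. sr_radical (J i))"
  using assms by (induction A rule: finite_induct) (simp_all add: sr_radical_UNIV sr_radical_Int sr_ideal_INT)

lemma sr_colon_INT: "sr_colon (\<Inter>i\<in>A. J i) x = (\<Inter>i\<in>A. sr_colon (J i) x)"
  unfolding sr_colon_def by auto

lemma sr_ideal_colon:
  assumes "sr_ideal J"
  shows "sr_ideal (sr_colon J x)"
proof -
  have "sr_colon J x \<noteq> {}"
    using sr_ideal_zero[OF assms] unfolding sr_colon_def by (metis empty_Collect_eq mult_zero_left)
  then show ?thesis
    using assms unfolding sr_ideal_def sr_colon_def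
    by (auto simp: distrib_right mult.assoc mult.left_commute)
qed

lemma sr_prime_radical_primary:
  assumes Q: "sr_primary Q"
  shows "sr_prime (sr_radical Q)"
proof -
  have QI: "sr_ideal Q" and "Q \<noteq> UNIV"
    using Q unfolding sr_primary_def by auto
  then have "1 \<notin> sr_radical Q"
    by (auto elim: sr_radicalE simp: sr_ideal_one_iff)
  moreover have "a \<in> sr_radical Q \<or> b \<in> sr_radical Q" if "a * b \<in> sr_radical Q" for a b
  proof -
    obtain m where m: "1 \<le> m" "a ^ m * b ^ m \<in> Q"
      using \<open>a * b \<in> sr_radical Q\<close> by (auto elim!: sr_radicalE simp: power_mult_distrib)
    then have "a ^ m \<in> Q \<or> b ^ m \<in> sr_radical Q"
      using Q unfolding sr_primary_def by blast
    then show ?thesis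
      using m(1) sr_radicalI sr_radical_power by blast
  qed
  ultimately show ?thesis
    unfolding sr_prime_def using sr_ideal_radical[OF QI] by auto
qed

lemma sr_radical_colon_primary:
  assumes Q: "sr_primary Q"
  shows "sr_radical (sr_colon Q x) = (if x \<in> Q then UNIV else sr_radical Q)"
proof (cases "x \<in> Q")
  case True
  then have "sr_colon Q x = UNIV"
    using Q unfolding sr_primary_def sr_colon_def by (auto intro: sr_ideal_mult_left)
  then show ?thesis
    using True by (simp add: sr_radical_UNIV)
next
  case False
  have "a \<in> sr_radical Q" if a: "a \<in> sr_radical (sr_colon Q x)" for a
  proof -
    obtain m where "1 \<le> m" "x * a ^ m \<in> Q"
      using a by (auto elim!: sr_radicalE simp: sr_colon_def mult.commute)
    then show ?thesis
      using Q False sr_radical_power unfolding sr_primary_def by blast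
  qed
  moreover have "a \<in> sr_radical (sr_colon Q x)" if "a \<in> sr_radical Q" for a
    using that Q unfolding sr_primary_def sr_colon_def
    by (auto elim!: sr_radicalE intro: sr_radicalI sr_ideal_mult_right)
  ultimately show ?thesis
    using False by auto
qed

lemma sr_radical_colon_INT_primary:
  assumes "finite A" "\<forall>i\<in>A. sr_primary (Q i)"
  shows "sr_radical (sr_colon (\<Inter>i\<in>A. Q i) x) = (\<Inter>i\<in>{i\<in>A. x \<notin> Q i}. sr_radical (Q i))"
proof -
  have "\<forall>i\<in>A. sr_ideal (sr_colon (Q i) x)"
    using assms(2) by (simp add: sr_primary_def sr_ideal_colon)
  then have "sr_radical (sr_colon (\<Inter>i\<in>A. Q i) x) = (\<Inter>i\<in>A. sr_radical (sr_colon (Q i) x))"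
    by (simp add: sr_colon_INT sr_radical_INT[OF assms(1)])
  also have "\<dots> = (\<Inter>i\<in>{i\<in>A. x \<notin> Q i}. sr_radical (Q i))"
    using assms(2) by (auto simp: sr_radical_colon_primary split: if_splits)
  finally show ?thesis .
qed

lemma sr_prime_prod:
  assumes "sr_prime P" "prod f S \<in> P"
  shows "\<exists>j\<in>S. f j \<in> P"
  using assms(2)
proof (induction S rule: infinite_finite_induct)
  case (insert x F)
  then show ?case
    using assms(1) unfolding sr_prime_def by auto
qed (use assms(1) in \<open>auto simp: sr_prime_def sr_ideal_one_iff\<close>)

lemma sr_prime_eq_INT:
  assumes P: "sr_prime P" and "finite S" and J: "\<forall>i\<in>S. sr_ideal (J i)"
    and P_eq: "P = (\<Inter>i\<in>S. J i)"
  shows "\<exists>i\<in>S. P = J i"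
proof (rule ccontr)
  assume "\<not> ?thesis"
  then have "\<forall>i\<in>S. \<exists>b. b \<in> J i \<and> b \<notin> P"
    using P_eq by blast
  then obtain g where g: "\<And>i. i \<in> S \<Longrightarrow> g i \<in> J i \<and> g i \<notin> P"
    by metis
  have "prod g S \<in> J i" if "i \<in> S" for i
    using that g J \<open>finite S\<close> by (simp add: prod.remove sr_ideal_mult_right)
  then have "prod g S \<in> P"
    using P_eq by blast
  then show False
    using sr_prime_prod[OF P] g by blast
qed

lemma reduced_primary_decomp_radical_colon:
  assumes dec: "reduced_primary_decomp I n Q" and "j < n"
  shows "\<exists>x. sr_radical (sr_colon I x) = sr_radical (Q j)"
proof -
  have I: "I = (\<Inter>i\<in>{..<n}. Q i)" and prim: "\<forall>i\<in>{..<n}. sr_primary (Q i)"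
    and minimal: "\<And>K. K \<subset> {..<n} \<Longrightarrow> I \<noteq> (\<Inter>i\<in>K. Q i)"
    using dec unfolding reduced_primary_decomp_def by blast+
  have "{..<n} - {j} \<subset> {..<n}"
    using \<open>j < n\<close> by auto
  then have "I \<noteq> (\<Inter>i\<in>{..<n} - {j}. Q i)"
    by (rule minimal)
  then obtain x where x: "x \<in> (\<Inter>i\<in>{..<n} - {j}. Q i)" "x \<notin> I"
    using I by blast
  then have "{i\<in>{..<n}. x \<notin> Q i} = {j}"
    using I \<open>j < n\<close> by auto
  then have "sr_radical (sr_colon I x) = sr_radical (Q j)"
    using sr_radical_colon_INT_primary[of "{..<n}" Q x] prim I by simp
  then show ?thesis ..
qed

theorem theorem2p13:
  fixes I :: "'a::comm_semiring_1 set" and Q :: "nat \<Rightarrow> 'a set" and n :: nat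
  assumes "sr_noetherian TYPE('a)"
    and "k_ideal I"
    and "reduced_primary_decomp I n Q"
  shows "(\<lambda>i. sr_radical (Q i)) ` {..<n} =
         {P. sr_prime P \<and> (\<exists>x. P = sr_radical (sr_colon I x))}"
proof
  have I: "I = (\<Inter>i\<in>{..<n}. Q i)" and prim: "\<forall>i\<in>{..<n}. sr_primary (Q i)"
    using assms(3) unfolding reduced_primary_decomp_def by blast+
  show "(\<lambda>i. sr_radical (Q i)) ` {..<n} \<subseteq> {P. sr_prime P \<and> (\<exists>x. P = sr_radical (sr_colon I x))}"
  proof (rule image_subsetI)
    fix j assume j: "j \<in> {..<n}"
    then obtain x where "sr_radical (Q j) = sr_radical (sr_colon I x)"
      using reduced_primary_decomp_radical_colon[OF assms(3)] by (metis lessThan_iff)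
    moreover have "sr_prime (sr_radical (Q j))"
      using prim j by (simp add: sr_prime_radical_primary)
    ultimately show "sr_radical (Q j) \<in> {P. sr_prime P \<and> (\<exists>x. P = sr_radical (sr_colon I x))}"
      by blast
  qed
  show "{P. sr_prime P \<and> (\<exists>x. P = sr_radical (sr_colon I x))} \<subseteq> (\<lambda>i. sr_radical (Q i)) ` {..<n}"
  proof clarify
    fix x
    assume prime: "sr_prime (sr_radical (sr_colon I x))"
    let ?S = "{i\<in>{..<n}. x \<notin> Q i}"
    have "sr_radical (sr_colon I x) = (\<Inter>i\<in>?S. sr_radical (Q i))"
      using sr_radical_colon_INT_primary[of "{..<n}" Q x] prim I by simp
    moreover have "\<forall>i\<in>?S. sr_ideal (sr_radical (Q i))"
      using prim by (simp add: sr_primary_def sr_ideal_radical)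
    ultimately obtain i where "i \<in> ?S" "sr_radical (sr_colon I x) = sr_radical (Q i)"
      using sr_prime_eq_INT[OF prime, of ?S "\<lambda>i. sr_radical (Q i)"] by auto
    then show "sr_radical (sr_colon I x) \<in> (\<lambda>i. sr_radical (Q i)) ` {..<n}"
      by auto
  qed
qed

end
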